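(* Let $t>0$ and $k$ be integers. If there is a wall on $t$ colors whose graph has no clique on $k$ vertices, then there is a wall on $t-1$ colors whose graph has no clique on $k$ vertices.
   Context: An interval graph $G=(V,E)$ comes with an interval representation $v\mapsto I_v$ (intervals of $\mathbb{R}$, distinct $u,v$ adjacent iff $I_u\cap I_v\ne\emptyset$); graphs are finite. $N[v]$ is the closed neighborhood of $v$ and $f(U)$ the image of $U$. A wall is a pair $(G,f)$ where $G$ is an interval graph on vertex set $V$ with a given interval representation, $f\colon V\to\{1,2,\dots\}$ is a proper coloring of $G$, and $f(N[v])\supseteq\{1,\dots,f(v)\}$ for every $v\in V$. It is a wall on $t$ colors if $|f(V)|=t$. *)

theory Defs
  imports "HOL-Analysis.Analysis"
begin

definition interval_rep :: "'a set \<Rightarrow> ('a \<Rightarrow> real set) \<Rightarrow> bool" where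
  "interval_rep V I \<longleftrightarrow> finite V \<and> (\<forall>v\<in>V. is_interval (I v) \<and> I v \<noteq> {})"

definition adj :: "('a \<Rightarrow> real set) \<Rightarrow> 'a \<Rightarrow> 'a \<Rightarrow> bool" where
  "adj I u v \<longleftrightarrow> u \<noteq> v \<and> I u \<inter> I v \<noteq> {}"

definition closed_nbhd :: "'a set \<Rightarrow> ('a \<Rightarrow> real set) \<Rightarrow> 'a \<Rightarrow> 'a set" where
  "closed_nbhd V I v = {u \<in> V. u = v \<or> adj I u v}"

definition is_wall :: "'a set \<Rightarrow> ('a \<Rightarrow> real set) \<Rightarrow> ('a \<Rightarrow> nat) \<Rightarrow> bool" where
  "is_wall V I f \<longleftrightarrow> interval_rep V I
     \<and> (\<forall>v\<in>V. f v \<ge> 1)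
     \<and> (\<forall>u\<in>V. \<forall>v\<in>V. adj I u v \<longrightarrow> f u \<noteq> f v)
     \<and> (\<forall>v\<in>V. {1..f v} \<subseteq> f ` closed_nbhd V I v)"

definition wall_on :: "'a set \<Rightarrow> ('a \<Rightarrow> real set) \<Rightarrow> ('a \<Rightarrow> nat) \<Rightarrow> int \<Rightarrow> bool" where
  "wall_on V I f t \<longleftrightarrow> is_wall V I f \<and> int (card (f ` V)) = t"

definition has_clique :: "'a set \<Rightarrow> ('a \<Rightarrow> real set) \<Rightarrow> int \<Rightarrow> bool" where
  "has_clique V I k \<longleftrightarrow> (\<exists>K\<subseteq>V. int (card K) = k \<and> (\<forall>u\<in>K. \<forall>v\<in>K. u \<noteq> v \<longrightarrow> adj I u v))"

end

theory Submission
  imports Defs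
begin

text \<open>In a wall the colours used are exactly 1, ..., t: the vertex of largest colour sees
all smaller colours in its closed neighbourhood. Deleting the vertices of colour t leaves a
wall on t - 1 colours, because the condition at a vertex v only involves colours at most
f v, and these are never deleted.\<close>

lemma wall_colors_eq_atLeastAtMost:
  assumes w: "is_wall V I f"
  shows "f ` V = {1..card (f ` V)}"
proof (cases "V = {}")
  case False
  have fin: "finite (f ` V)" using w by (simp add: is_wall_def interval_rep_def)
  have "Max (f ` V) \<in> f ` V" using fin False by simp
  then obtain v where v: "v \<in> V" "f v = Max (f ` V)" by (metis imageE)
  have "{1..f v} \<subseteq> f ` V"
    using w v(1) unfolding is_wall_def closed_nbhd_def by blast
  moreover have "f ` V \<subseteq> {1..f v}"
    using w fin v(2) unfolding is_wall_def by auto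
  ultimately have "f ` V = {1..f v}" by blast
  then show ?thesis by simp
qed simp

lemma is_wall_restrict_colors:
  assumes w: "is_wall V I f"
  shows "is_wall {v\<in>V. f v \<le> c} I f"
proof -
  let ?U = "{v\<in>V. f v \<le> c}"
  have "{1..f v} \<subseteq> f ` closed_nbhd ?U I v" if v: "v \<in> ?U" for v
  proof
    fix x assume x: "x \<in> {1..f v}"
    then obtain u where u: "u \<in> closed_nbhd V I v" "f u = x"
      using w v unfolding is_wall_def by blast
    then have "u \<in> closed_nbhd ?U I v"
      using x v unfolding closed_nbhd_def by auto
    then show "x \<in> f ` closed_nbhd ?U I v" using u by blast
  qed
  then show ?thesis using w unfolding is_wall_def interval_rep_def by auto
qed

lemma closed_nbhd_bij_betw:
  assumes b: "bij_betw e W U" and v: "v \<in> W"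
  shows "closed_nbhd U I (e v) = e ` closed_nbhd W (I \<circ> e) v"
proof -
  have "adj (I \<circ> e) u v = adj I (e u) (e v)" if "u \<in> W" for u
    using b v that unfolding adj_def bij_betw_def by (auto simp: inj_on_eq_iff)
  then show ?thesis
    using b v unfolding closed_nbhd_def bij_betw_def by (auto simp: inj_on_eq_iff)
qed

lemma is_wall_bij_betw:
  assumes b: "bij_betw e W U" and w: "is_wall U I f"
  shows "is_wall W (I \<circ> e) (f \<circ> e)"
proof -
  have im: "e ` W = U" and inj: "inj_on e W" using b by (auto simp: bij_betw_def)
  have "finite W" using b w bij_betw_finite by (auto simp: is_wall_def interval_rep_def)
  then have "interval_rep W (I \<circ> e)" using w im unfolding is_wall_def interval_rep_def by auto
  moreover have "\<forall>u\<in>W. \<forall>v\<in>W. adj (I \<circ> e) u v \<longrightarrow> (f \<circ> e) u \<noteq> (f \<circ> e) v"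
    using w im inj unfolding is_wall_def adj_def by (metis comp_apply imageI inj_on_eq_iff)
  moreover have "{1..(f \<circ> e) v} \<subseteq> (f \<circ> e) ` closed_nbhd W (I \<circ> e) v" if v: "v \<in> W" for v
  proof -
    have "{1..f (e v)} \<subseteq> f ` closed_nbhd U I (e v)" using w im v unfolding is_wall_def by auto
    then show ?thesis by (simp add: closed_nbhd_bij_betw[OF b v] image_comp)
  qed
  ultimately show ?thesis using w im unfolding is_wall_def by auto
qed

lemma has_clique_bij_betw:
  assumes b: "bij_betw e W U" and h: "has_clique W (I \<circ> e) k"
  shows "has_clique U I k"
proof -
  obtain K where K: "K \<subseteq> W" "int (card K) = k"
    "\<forall>u\<in>K. \<forall>v\<in>K. u \<noteq> v \<longrightarrow> adj (I \<circ> e) u v"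
    using h unfolding has_clique_def by blast
  have "card (e ` K) = card K"
    using b K(1) by (meson bij_betw_def card_image inj_on_subset)
  moreover have "e ` K \<subseteq> U" using b K(1) by (auto simp: bij_betw_def)
  moreover have "\<forall>u\<in>e ` K. \<forall>v\<in>e ` K. u \<noteq> v \<longrightarrow> adj I u v"
    using K(3) unfolding adj_def by auto
  ultimately show ?thesis unfolding has_clique_def using K(2) by metis
qed

lemma has_clique_mono:
  "U \<subseteq> V \<Longrightarrow> has_clique U I k \<Longrightarrow> has_clique V I k"
  unfolding has_clique_def by blast

lemma wall_on_relabel_nat:
  assumes w: "wall_on U I f t" and nc: "\<not> has_clique U I k"
  shows "\<exists>(U' :: nat set) I' f'. wall_on U' I' f' t \<and> \<not> has_clique U' I' k"
proof -
  have "finite U" using w by (simp add: wall_on_def is_wall_def interval_rep_def)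
  then obtain h where "bij_betw h U {0..<card U}" using ex_bij_betw_finite_nat by blast
  then have b: "bij_betw (inv_into U h) {0..<card U} U" by (rule bij_betw_inv_into)
  have "(f \<circ> inv_into U h) ` {0..<card U} = f ` U"
    using b by (metis bij_betw_imp_surj_on image_comp)
  then have "wall_on {0..<card U} (I \<circ> inv_into U h) (f \<circ> inv_into U h) t"
    using w is_wall_bij_betw[OF b] unfolding wall_on_def by simp
  moreover have "\<not> has_clique {0..<card U} (I \<circ> inv_into U h) k"
    using has_clique_bij_betw[OF b] nc by blast
  ultimately show ?thesis by blast
qed

theorem mainTheorem5:
  fixes t k :: int and V :: "'a set" and I :: "'a \<Rightarrow> real set" and f :: "'a \<Rightarrow> nat"
  assumes "t > 0"
    and "wall_on V I f t"
    and "\<not> has_clique V I k"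
  shows "\<exists>(V' :: nat set) (I' :: nat \<Rightarrow> real set) (f' :: nat \<Rightarrow> nat).
           wall_on V' I' f' (t - 1) \<and> \<not> has_clique V' I' k"
proof -
  let ?U = "{v\<in>V. f v \<le> nat t - 1}"
  have w: "is_wall V I f" and ct: "int (card (f ` V)) = t"
    using assms(2) unfolding wall_on_def by auto
  then have "f ` V = {1..nat t}" using wall_colors_eq_atLeastAtMost by force
  then have "f ` ?U = {1..nat t - 1}" by fastforce
  then have "wall_on ?U I f (t - 1)"
    using is_wall_restrict_colors[OF w] assms(1) unfolding wall_on_def by simp
  moreover have "\<not> has_clique ?U I k"
    using assms(3) has_clique_mono[of ?U V] by blast
  ultimately show ?thesis using wall_on_relabel_nat by blast
qed

end
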